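(* Let $K$ be the Cayley complex of the presentation $\langle a,b,c \mid aba^{-1}b^{-1}c\rangle$ of the group $G=\mathbb{F}_3/N$ (vertices are the elements of $G$, there is an edge from $g$ to $gx$ labelled $x$ for each $g\in G$ and $x\in\{a,b,c\}$, and for each $g\in G$ a pentagonal 2-cell is attached along the edge-loop starting at $g$ reading $aba^{-1}b^{-1}c$). Let $\gamma$ be an embedded closed edge-cycle in $K$ and let $U = \Delta_1 \cup \dots \cup \Delta_F \subset K$ be a subcomplex, consisting of faces $\Delta_i$ of $K$, which is topologically a disc with boundary $\partial U=\gamma$. Then either $U$ consists of exactly one face, or there exist at least two distinct faces $\Delta_i, \Delta_j$ of $U$ each of which intersects $\partial U$ along $4$ edges.
   Context: $K$ is a simply connected 2-dimensional PL manifold with boundary, and every vertex of $K$ lies on the boundary of $K$. *)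

theory Defs
  imports "HOL-Analysis.Analysis"
begin

datatype gen = GA | GB | GC

type_synonym letter = "gen \<times> bool"   \<comment> \<open>(x, True) = x, (x, False) = x^-1\<close>
type_synonym word = "letter list"

definition inv_letter :: "letter \<Rightarrow> letter" where
  "inv_letter l = (fst l, \<not> snd l)"

definition relator :: word where
  "relator = [(GA, True), (GB, True), (GA, False), (GB, False), (GC, True)]"

inductive pres_step :: "word \<Rightarrow> word \<Rightarrow> bool" where
  cancel: "pres_step (p @ [l, inv_letter l] @ q) (p @ q)"
| rel: "pres_step (p @ relator @ q) (p @ q)"
| relinv: "pres_step (p @ rev (map inv_letter relator) @ q) (p @ q)"

definition pres_eq :: "word \<Rightarrow> word \<Rightarrow> bool" where
  "pres_eq = equivclp pres_step"

type_synonym grp = "word set"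

definition vert :: "word \<Rightarrow> grp" where
  "vert w = {v. pres_eq w v}"

definition Gset :: "grp set" where
  "Gset = range vert"

definition gmul :: "grp \<Rightarrow> word \<Rightarrow> grp" where
  "gmul g u = vert ((SOME w. w \<in> g) @ u)"

type_synonym edge = "grp \<times> gen"

definition edge_src :: "edge \<Rightarrow> grp" where "edge_src e = fst e"
definition edge_tgt :: "edge \<Rightarrow> grp" where "edge_tgt e = gmul (fst e) [(snd e, True)]"

definition fcorner :: "grp \<Rightarrow> nat \<Rightarrow> grp" where
  "fcorner g i = gmul g (take i relator)"

definition face_edge :: "grp \<Rightarrow> nat \<Rightarrow> edge" where
  "face_edge g i = (if snd (relator ! i) then (fcorner g i, fst (relator ! i))
                    else (fcorner g (Suc i), fst (relator ! i)))"

definition face_edges :: "grp \<Rightarrow> edge set" where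
  "face_edges g = face_edge g ` {..<5}"

definition pc :: "nat \<Rightarrow> complex" where
  "pc i = cis (2 * pi * real i / 5)"

definition Pent :: "complex set" where
  "Pent = convex hull (pc ` {..<5})"

datatype 'v pt = Vtx 'v | EdgePt "'v \<times> gen" real | FacePt 'v complex

definition canon :: "grp \<Rightarrow> complex \<Rightarrow> grp pt" where
  "canon g p =
    (if \<exists>i<5. p = pc i then Vtx (fcorner g (SOME i. i < 5 \<and> p = pc i))
     else if \<exists>i<5. \<exists>t. 0 < t \<and> t < 1 \<and> p = of_real (1 - t) * pc i + of_real t * pc (Suc i)
     then (let (i, t) = (SOME (i, t). i < 5 \<and> 0 < t \<and> t < 1 \<and>
                           p = of_real (1 - t) * pc i + of_real t * pc (Suc i))
           in EdgePt (face_edge g i) (if snd (relator ! i) then t else 1 - t))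
     else FacePt g p)"

definition quotient_topology :: "'a topology \<Rightarrow> ('a \<Rightarrow> 'b) \<Rightarrow> 'b topology" where
  "quotient_topology X f =
     topology (\<lambda>V. V \<subseteq> f ` topspace X \<and> openin X {x \<in> topspace X. f x \<in> V})"

definition K_top :: "grp pt topology" where
  "K_top = quotient_topology (prod_topology (discrete_topology Gset) (top_of_set Pent))
                             (\<lambda>(g, p). canon g p)"

definition real_faces :: "grp set \<Rightarrow> grp pt set" where
  "real_faces U = (\<lambda>(g, p). canon g p) ` (U \<times> Pent)"

definition real_edge :: "edge \<Rightarrow> grp pt set" where
  "real_edge e = {Vtx (edge_src e), Vtx (edge_tgt e)} \<union> {EdgePt e s | s. 0 < s \<and> s < 1}"

definition embedded_edge_cycle :: "grp list \<Rightarrow> edge list \<Rightarrow> bool" where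
  "embedded_edge_cycle vs es \<longleftrightarrow>
     length vs = length es \<and> length vs \<ge> 1 \<and> set vs \<subseteq> Gset \<and> distinct vs \<and> distinct es \<and>
     (\<forall>i < length es. {edge_src (es ! i), edge_tgt (es ! i)} =
                       {vs ! i, vs ! (Suc i mod length vs)})"

end

theory Submission
  imports Defs "HOL-Homology.Invariance_of_Domain"
begin

(* Replacing c by (a b a^-1 b^-1)^-1 identifies G with the free group F(a, b). Two faces of K
   share a side exactly when they differ by a single free generator, so the dual graph of K is
   the Cayley tree of F(a, b) and the faces of U span a forest: at most |U| - 1 sides are shared
   inside U. By invariance of domain, a side of a face of U that is not shared with another face
   of U lies on the boundary cycle. In particular the c-side of every face, which is never shared,
   lies on it; so no face has all five sides on the cycle (they would form the whole cycle), and
   the faces of U together have at least 5 |U| - 2 (|U| - 1) = 3 |U| + 2 boundary sides, at most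
   4 each. Hence two faces have exactly 4. *)

abbreviation la :: letter where "la \<equiv> (GA, True)"
abbreviation lA :: letter where "lA \<equiv> (GA, False)"
abbreviation lb :: letter where "lb \<equiv> (GB, True)"
abbreviation lB :: letter where "lB \<equiv> (GB, False)"

lemma inv_letter_pair [simp]: "inv_letter (x, b) = (x, \<not> b)"
  by (simp add: inv_letter_def)

lemma inv_letter_inv_letter [simp]: "inv_letter (inv_letter l) = l"
  by (simp add: inv_letter_def)

lemma inv_letter_eq_iff [simp]: "inv_letter l = inv_letter m \<longleftrightarrow> l = m"
  by (metis inv_letter_inv_letter)

definition inv_word :: "word \<Rightarrow> word" where
  "inv_word w = rev (map inv_letter w)"

lemma inv_word_simps [simp]:
  "inv_word [] = []"
  "inv_word (l # w) = inv_word w @ [inv_letter l]"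
  "inv_word (u @ v) = inv_word v @ inv_word u"
  "inv_word (inv_word w) = w"
  by (auto simp: inv_word_def rev_map[symmetric] o_def)

definition cons_reduce :: "letter \<Rightarrow> word \<Rightarrow> word" where
  "cons_reduce l w = (case w of [] \<Rightarrow> [l] | m # w' \<Rightarrow> if m = inv_letter l then w' else l # w)"

fun reduce :: "word \<Rightarrow> word" where
  "reduce [] = []"
| "reduce (l # w) = cons_reduce l (reduce w)"

fun reduced :: "word \<Rightarrow> bool" where
  "reduced [] = True"
| "reduced [l] = True"
| "reduced (l # m # w) = (m \<noteq> inv_letter l \<and> reduced (m # w))"

lemma reduced_ConsD: "reduced (l # w) \<Longrightarrow> reduced w"
  by (cases w) auto

lemma reduced_cons_reduce [simp]: "reduced w \<Longrightarrow> reduced (cons_reduce l w)"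
  by (cases w) (auto simp: cons_reduce_def dest: reduced_ConsD)

lemma reduced_reduce [simp]: "reduced (reduce w)"
  by (induction w) auto

lemma cons_reduce_cancel [simp]:
  "m = inv_letter l \<Longrightarrow> reduced w \<Longrightarrow> cons_reduce l (cons_reduce m w) = w"
  by (cases w; cases "tl w") (auto simp: cons_reduce_def)

lemma reduce_reduced: "reduced w \<Longrightarrow> reduce w = w"
  by (induction w rule: reduced.induct) (auto simp: cons_reduce_def)

lemma reduce_reduce [simp]: "reduce (reduce w) = reduce w"
  by (simp add: reduce_reduced)

lemma reduce_append_reduce: "reduce (u @ reduce w) = reduce (u @ w)"
  by (induction u) auto

lemma reduce_cancel: "reduce (u @ w @ inv_word w @ v) = reduce (u @ v)"
proof -
  have "reduce (w @ inv_word w @ v) = reduce v" for v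
    by (induction w arbitrary: v) auto
  then show ?thesis
    by (metis reduce_append_reduce)
qed

lemma length_cons_reduce:
  "reduced w \<Longrightarrow> length (cons_reduce l w) = Suc (length w) \<or> Suc (length (cons_reduce l w)) = length w"
  by (cases w) (auto simp: cons_reduce_def)

lemma cons_reduce_shorter: "length (cons_reduce l w) < length w \<Longrightarrow> hd w = inv_letter l"
  by (cases w) (auto simp: cons_reduce_def split: if_splits)

lemma cons_reduce_inj: "cons_reduce l w = cons_reduce m w \<Longrightarrow> l = m"
  by (cases w) (auto simp: cons_reduce_def split: if_splits dest: arg_cong[of _ _ length])

section \<open>Eliminating the generator c\<close>

definition kill_c_letter :: "letter \<Rightarrow> word" where
  "kill_c_letter l =
     (case l of (GC, True) \<Rightarrow> [lb, la, lB, lA] | (GC, False) \<Rightarrow> [la, lb, lA, lB] | _ \<Rightarrow> [l])"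

definition kill_c :: "word \<Rightarrow> word" where
  "kill_c w = concat (map kill_c_letter w)"

lemma kill_c_simps [simp]:
  "kill_c [] = []" "kill_c (l # w) = kill_c_letter l @ kill_c w" "kill_c (u @ v) = kill_c u @ kill_c v"
  by (auto simp: kill_c_def)

lemma kill_c_letter_inv_letter: "kill_c_letter (inv_letter l) = inv_word (kill_c_letter l)"
  by (cases l) (rename_tac x b, case_tac x; case_tac b; simp add: kill_c_letter_def)

text \<open>Substituting (a b a^-1 b^-1)^-1 for c kills the relator, so the reduced form of the
  image in F(a, b) is an invariant of G. The inversion makes right multiplication in G act
  on the left of reduced words.\<close>
definition free_form :: "word \<Rightarrow> word" where
  "free_form w = reduce (inv_word (kill_c w))"

lemma free_form_pres_step: "pres_step u v \<Longrightarrow> free_form u = free_form v"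
proof (induction rule: pres_step.induct)
  case (cancel p l q)
  have "inv_word (kill_c (p @ [l, inv_letter l] @ q)) =
      inv_word (kill_c q) @ kill_c_letter l @ inv_word (kill_c_letter l) @ inv_word (kill_c p)"
    by (simp add: kill_c_letter_inv_letter)
  then show ?case
    unfolding free_form_def by (simp only: reduce_cancel) simp
next
  case (rel p q)
  have "inv_word (kill_c (p @ relator @ q)) =
      inv_word (kill_c q) @ [la, lb, lA, lB] @ inv_word [la, lb, lA, lB] @ inv_word (kill_c p)"
    by (simp add: relator_def kill_c_letter_def)
  then show ?case
    unfolding free_form_def by (simp only: reduce_cancel) simp
next
  case (relinv p q)
  have "inv_word (kill_c (p @ rev (map inv_letter relator) @ q)) =
      inv_word (kill_c q) @ [la, lb, lA, lB] @ inv_word [la, lb, lA, lB] @ inv_word (kill_c p)"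
    by (simp add: relator_def kill_c_letter_def)
  then show ?case
    unfolding free_form_def by (simp only: reduce_cancel) simp
qed

lemma free_form_pres_eq: "pres_eq u v \<Longrightarrow> free_form u = free_form v"
  unfolding pres_eq_def by (induction rule: equivclp_induct) (auto dest: free_form_pres_step)

lemma pres_eq_refl [simp]: "pres_eq u u"
  by (simp add: pres_eq_def)

lemma pres_eq_sym: "pres_eq u v \<Longrightarrow> pres_eq v u"
  by (simp add: pres_eq_def equivclp_sym)

lemma pres_eq_trans [trans]: "pres_eq u v \<Longrightarrow> pres_eq v w \<Longrightarrow> pres_eq u w"
  unfolding pres_eq_def by (rule equivclp_trans)

lemma pres_step_append: "pres_step u v \<Longrightarrow> pres_step (p @ u @ q) (p @ v @ q)"
  by (induction rule: pres_step.induct) (metis append.assoc pres_step.intros)+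

lemma pres_eq_append: "pres_eq u v \<Longrightarrow> pres_eq (p @ u @ q) (p @ v @ q)"
  unfolding pres_eq_def
  by (induction rule: equivclp_induct) (auto intro: equivclp_into_equivclp pres_step_append)

lemma pres_eq_cancel: "pres_eq (p @ w @ inv_word w @ q) (p @ q)"
proof (induction w arbitrary: p q)
  case (Cons l w)
  have "pres_eq (p @ (l # w) @ inv_word (l # w) @ q) ((p @ [l]) @ w @ inv_word w @ inv_letter l # q)"
    by simp
  also have "pres_eq \<dots> (p @ [l, inv_letter l] @ q)"
    using Cons.IH[of "p @ [l]" "inv_letter l # q"] by simp
  also have "pres_eq \<dots> (p @ q)"
    unfolding pres_eq_def by (blast intro: pres_step.cancel)
  finally show ?case .
qed simp

definition rep :: "grp \<Rightarrow> word" where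
  "rep g = (SOME w. w \<in> g)"

lemma gmul_rep: "gmul g u = vert (rep g @ u)"
  by (simp add: gmul_def rep_def)

lemma vert_eq_iff: "vert u = vert v \<longleftrightarrow> pres_eq u v"
  unfolding vert_def by (auto simp: set_eq_iff intro: pres_eq_trans pres_eq_sym)

lemma pres_eq_rep_vert: "pres_eq u (rep (vert u))"
  unfolding rep_def by (rule someI2[of _ u]) (auto simp: vert_def)

lemma vert_rep: "g \<in> Gset \<Longrightarrow> vert (rep g) = g"
  unfolding Gset_def using pres_eq_rep_vert vert_eq_iff pres_eq_sym by auto

lemma gmul_vert: "gmul (vert u) v = vert (u @ v)"
  using pres_eq_append[OF pres_eq_sym[OF pres_eq_rep_vert], of "[]" u v]
  by (simp add: gmul_rep vert_eq_iff)

lemma gmul_gmul: "gmul (gmul g u) v = gmul g (u @ v)"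
  by (simp add: gmul_rep[of g] gmul_vert)

lemma gmul_Nil: "g \<in> Gset \<Longrightarrow> gmul g [] = g"
  by (simp add: gmul_rep vert_rep)

lemma gmul_cancel: "gmul g (p @ w @ inv_word w @ q) = gmul g (p @ q)"
  using pres_eq_cancel[of "rep g @ p"] by (simp add: gmul_rep vert_eq_iff)

lemma gmul_relator: "gmul g (p @ relator @ q) = gmul g (p @ q)"
proof -
  have "pres_step ((rep g @ p) @ relator @ q) ((rep g @ p) @ q)"
    by (rule pres_step.rel)
  then show ?thesis
    by (simp add: gmul_rep vert_eq_iff pres_eq_def r_into_equivclp)
qed

lemma gmul_eq_gmulD:
  assumes "g' \<in> Gset" and "gmul g u = gmul g' v"
  shows "g' = gmul g (u @ inv_word v)"
proof -
  have "g' = gmul g' (v @ inv_word v)"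
    using gmul_cancel[of g' "[]" v "[]"] gmul_Nil[OF assms(1)] by simp
  also have "\<dots> = gmul g (u @ inv_word v)"
    by (simp flip: gmul_gmul add: assms(2))
  finally show ?thesis .
qed

section \<open>Faces of K and their neighbours\<close>

definition side_src_word :: "nat \<Rightarrow> word" where
  "side_src_word i = (if snd (relator ! i) then take i relator else take (Suc i) relator)"

lemma face_edge_eq: "face_edge g i = (gmul g (side_src_word i), fst (relator ! i))"
  by (simp add: face_edge_def fcorner_def side_src_word_def)

definition opp_side :: "nat \<Rightarrow> nat" where
  "opp_side i = (i + 2) mod 4"

definition face_nbr :: "nat \<Rightarrow> grp \<Rightarrow> grp" where
  "face_nbr i g = gmul g (side_src_word i @ inv_word (side_src_word (opp_side i)))"

lemma opp_side_less: "i < 4 \<Longrightarrow> opp_side i < 4"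
  by (simp add: opp_side_def)

lemma opp_side_opp_side: "i < 4 \<Longrightarrow> opp_side (opp_side i) = i"
  unfolding opp_side_def by presburger

lemma face_edge_eq_face_edgeD:
  assumes "g \<in> Gset" and "g' \<in> Gset" and "i < 5" and "j < 5"
    and "face_edge g i = face_edge g' j"
  shows "(j = i \<and> g' = g) \<or> (i < 4 \<and> j = opp_side i \<and> g' = face_nbr i g)"
proof -
  have label: "fst (relator ! i) = fst (relator ! j)"
    and src: "gmul g (side_src_word i) = gmul g' (side_src_word j)"
    using assms(5) by (simp_all add: face_edge_eq)
  have g': "g' = gmul g (side_src_word i @ inv_word (side_src_word j))"
    using gmul_eq_gmulD[OF assms(2) src] .
  have "i = 0 \<or> i = 1 \<or> i = 2 \<or> i = 3 \<or> i = 4" "j = 0 \<or> j = 1 \<or> j = 2 \<or> j = 3 \<or> j = 4"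
    using assms(3,4) by auto
  then have "j = i \<or> (i < 4 \<and> j = opp_side i)"
    using label by (elim disjE) (simp_all add: relator_def opp_side_def)
  then show ?thesis
  proof
    assume "j = i"
    then show ?thesis
      using g' gmul_cancel[of g "[]" _ "[]"] gmul_Nil[OF assms(1)] by simp
  qed (auto simp: face_nbr_def g')
qed

text \<open>The prefix b^-1 a^-1 conjugates each of the four steps to a neighbouring face into left
  multiplication by a single letter: the dual graph of K is the Cayley tree of F(a, b), and
  the height of a face is its distance from a fixed face.\<close>
definition height_word :: "grp \<Rightarrow> word" where
  "height_word g = reduce (lB # lA # free_form (rep g))"

definition height :: "grp \<Rightarrow> nat" where
  "height g = length (height_word g)"

definition nbr_letter :: "nat \<Rightarrow> letter" where
  "nbr_letter i = [lb, lA, lB, la] ! i"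

lemma reduced_height_word [simp]: "reduced (height_word g)"
  by (simp add: height_word_def)

lemma height_word_vert: "height_word (vert u) = reduce (lB # lA # inv_word (kill_c u))"
proof -
  have "height_word (vert u) = reduce ([lB, lA] @ free_form u)"
    using free_form_pres_eq[OF pres_eq_rep_vert[of u]] by (simp add: height_word_def)
  then show ?thesis
    by (simp add: free_form_def reduce_append_reduce)
qed

lemma height_word_face_nbr:
  assumes "g \<in> Gset" and "i < 4"
  shows "height_word (face_nbr i g) = cons_reduce (nbr_letter i) (height_word g)"
proof -
  have "face_nbr i g = vert (rep g @ side_src_word i @ inv_word (side_src_word (opp_side i)))"
    by (simp add: face_nbr_def gmul_rep)
  moreover have "height_word g = reduce (lB # lA # inv_word (kill_c (rep g)))"
    using height_word_vert[of "rep g"] vert_rep[OF assms(1)] by simp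
  moreover have "i = 0 \<or> i = 1 \<or> i = 2 \<or> i = 3"
    using assms(2) by auto
  ultimately show ?thesis
    by (elim disjE) (simp_all add: height_word_vert side_src_word_def opp_side_def relator_def
        kill_c_letter_def nbr_letter_def)
qed

lemma height_face_nbr_neq: "g \<in> Gset \<Longrightarrow> i < 4 \<Longrightarrow> height (face_nbr i g) \<noteq> height g"
  using length_cons_reduce[of "height_word g" "nbr_letter i"]
  by (auto simp: height_def height_word_face_nbr)

lemma face_nbr_neq: "g \<in> Gset \<Longrightarrow> i < 4 \<Longrightarrow> face_nbr i g \<noteq> g"
  using height_face_nbr_neq[of g i] by auto

lemma nbr_letter_inj: "i < 4 \<Longrightarrow> j < 4 \<Longrightarrow> nbr_letter i = nbr_letter j \<Longrightarrow> i = j"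
  unfolding nbr_letter_def by (simp add: nth_eq_iff_index_eq)

lemma lower_face_nbr_unique:
  assumes "g \<in> Gset" and "i < 4" and "j < 4"
    and "height (face_nbr i g) < height g" and "height (face_nbr j g) < height g"
  shows "i = j"
proof -
  have hd: "hd (height_word g) = inv_letter (nbr_letter k)"
    if "k < 4" and "height (face_nbr k g) < height g" for k
    using that assms(1) cons_reduce_shorter[of "nbr_letter k" "height_word g"]
    by (simp add: height_def height_word_face_nbr)
  have "nbr_letter i = nbr_letter j"
    using hd[of i] hd[of j] assms(2-5) by simp
  then show ?thesis
    using nbr_letter_inj assms(2,3) by blast
qed

lemma face_nbr_inj:
  assumes "g \<in> Gset" and "i < 4" and "j < 4" and "face_nbr i g = face_nbr j g"
  shows "i = j"
proof -
  have "cons_reduce (nbr_letter i) (height_word g) = cons_reduce (nbr_letter j) (height_word g)"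
    using assms by (simp flip: height_word_face_nbr)
  then show ?thesis
    using assms(2,3) by (blast dest: cons_reduce_inj nbr_letter_inj)
qed

lemma face_nbr_opp_side:
  assumes "g \<in> Gset" and "i < 4"
  shows "face_nbr (opp_side i) (face_nbr i g) = g"
proof -
  let ?u = "side_src_word i" and ?v = "side_src_word (opp_side i)"
  have "face_nbr (opp_side i) (face_nbr i g) = gmul g (?u @ inv_word ?v @ ?v @ inv_word ?u)"
    by (simp add: face_nbr_def gmul_gmul opp_side_opp_side[OF assms(2)])
  also have "\<dots> = gmul g (?u @ inv_word ?u)"
    using gmul_cancel[of g ?u "inv_word ?v" "inv_word ?u"] by simp
  also have "\<dots> = g"
    using gmul_cancel[of g "[]" ?u "[]"] gmul_Nil[OF assms(1)] by simp
  finally show ?thesis .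
qed

lemma face_edge_inj:
  assumes "g \<in> Gset"
  shows "inj_on (face_edge g) {..<5}"
proof
  fix i j
  assume "i \<in> {..<5}" "j \<in> {..<5}" "face_edge g i = face_edge g j"
  then show "i = j"
    using face_edge_eq_face_edgeD[OF assms assms] face_nbr_neq[OF assms] by force
qed

lemma card_face_edges: "g \<in> Gset \<Longrightarrow> card (face_edges g) = 5"
  by (simp add: face_edges_def card_image face_edge_inj)

definition edge_ends :: "edge \<Rightarrow> grp set" where
  "edge_ends e = {edge_src e, edge_tgt e}"

lemma edge_ends_face_edge:
  assumes "j < 5"
  shows "edge_ends (face_edge g j) = {fcorner g j, fcorner g (Suc j mod 5)}"
proof -
  have tgt: "edge_tgt (gmul g u, x) = gmul g (u @ [(x, True)])" for u x
    by (simp add: edge_tgt_def gmul_gmul)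
  have "j = 0 \<or> j = 1 \<or> j = 2 \<or> j = 3 \<or> j = 4"
    using assms by auto
  then show ?thesis
    using gmul_cancel[of g "[la, lb]" "[lA]" "[]"] gmul_cancel[of g "[la, lb, lA]" "[lB]" "[]"]
      gmul_relator[of g "[]" "[]"]
    by (elim disjE) (simp_all add: face_edge_eq edge_ends_def edge_src_def tgt side_src_word_def
        fcorner_def relator_def insert_commute)
qed

lemma face_corner_shared:
  assumes "j < 5" and "w \<in> edge_ends (face_edge g j)"
  shows "\<exists>j'<5. j' \<noteq> j \<and> w \<in> edge_ends (face_edge g j')"
proof -
  consider "w = fcorner g j" | "w = fcorner g (Suc j mod 5)"
    using assms edge_ends_face_edge by blast
  then show ?thesis
  proof cases
    case 1
    have "(j + 4) mod 5 < 5" "(j + 4) mod 5 \<noteq> j" "Suc ((j + 4) mod 5) mod 5 = j"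
      using assms(1) by presburger+
    then show ?thesis
      using 1 edge_ends_face_edge[of "(j + 4) mod 5" g] by (intro exI[of _ "(j + 4) mod 5"]) auto
  next
    case 2
    have "Suc j mod 5 < 5" "Suc j mod 5 \<noteq> j"
      using assms(1) by presburger+
    then show ?thesis
      using 2 edge_ends_face_edge[of "Suc j mod 5"] by blast
  qed
qed

section \<open>Counting shared and boundary sides\<close>

text \<open>Orient every adjacent pair downwards: each element is the upper end of at most one such
  pair, and an element of minimal height of none.\<close>
lemma sum_card_adjacent_le:
  fixes adj :: "'a \<Rightarrow> 'a \<Rightarrow> bool" and ht :: "'a \<Rightarrow> 'b::linorder"
  assumes fin: "finite U" and ne: "U \<noteq> {}"
    and sym: "\<And>x y. x \<in> U \<Longrightarrow> y \<in> U \<Longrightarrow> adj x y \<Longrightarrow> adj y x"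
    and ht_neq: "\<And>x y. x \<in> U \<Longrightarrow> y \<in> U \<Longrightarrow> adj x y \<Longrightarrow> ht y \<noteq> ht x"
    and lower_unique: "\<And>x y z. x \<in> U \<Longrightarrow> y \<in> U \<Longrightarrow> z \<in> U \<Longrightarrow> adj x y \<Longrightarrow> adj x z \<Longrightarrow>
                         ht y < ht x \<Longrightarrow> ht z < ht x \<Longrightarrow> y = z"
  shows "(\<Sum>x\<in>U. card {y \<in> U. adj x y}) \<le> 2 * (card U - 1)"
proof -
  define D where "D = {(x, y) \<in> U \<times> U. adj x y \<and> ht y < ht x}"
  have "D \<subseteq> U \<times> U"
    by (auto simp: D_def)
  then have fin_D: "finite D"
    using fin by (meson finite_SigmaI finite_subset)
  have "Min (ht ` U) \<in> ht ` U"
    using fin ne by simp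
  then obtain x0 where x0: "x0 \<in> U" "ht x0 = Min (ht ` U)"
    by auto
  have "inj_on fst D"
    by (rule inj_onI) (auto simp: D_def intro: lower_unique)
  moreover have "fst ` D \<subseteq> U - {x0}"
    using x0 fin by (auto simp: D_def dest: Min_le[of "ht ` U", OF finite_imageI])
  ultimately have card_D: "card D \<le> card U - 1"
    using fin x0(1) by (metis card_Diff_singleton card_image card_mono finite_Diff)
  have "Sigma U (\<lambda>x. {y \<in> U. adj x y}) \<subseteq> D \<union> prod.swap ` D"
  proof
    fix p
    assume "p \<in> Sigma U (\<lambda>x. {y \<in> U. adj x y})"
    then obtain x y where p: "p = (x, y)" "x \<in> U" "y \<in> U" "adj x y"
      by auto
    show "p \<in> D \<union> prod.swap ` D"
    proof (cases "ht y < ht x")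
      case False
      then have "(y, x) \<in> D"
        using p ht_neq[of x y] sym[of x y] by (auto simp: D_def)
      then show ?thesis
        using p by (auto intro: image_eqI[of _ _ "(y, x)"])
    qed (use p in \<open>simp add: D_def\<close>)
  qed
  then have "card (Sigma U (\<lambda>x. {y \<in> U. adj x y})) \<le> card (D \<union> prod.swap ` D)"
    using fin_D by (intro card_mono) auto
  also have "\<dots> \<le> 2 * card D"
    using card_Un_le[of D "prod.swap ` D"] card_image_le[OF fin_D, of prod.swap] by simp
  finally show ?thesis
    using fin card_D by (simp add: card_SigmaI)
qed

lemma card_shared_sides_eq:
  assumes "g \<in> Gset"
  shows "card {i. i < 4 \<and> face_nbr i g \<in> U} = card {h \<in> U. \<exists>i<4. h = face_nbr i g}"
proof -
  have "inj_on (\<lambda>i. face_nbr i g) {i. i < 4 \<and> face_nbr i g \<in> U}"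
    by (rule inj_onI) (use face_nbr_inj[OF assms] in simp)
  then have "card ((\<lambda>i. face_nbr i g) ` {i. i < 4 \<and> face_nbr i g \<in> U}) =
      card {i. i < 4 \<and> face_nbr i g \<in> U}"
    by (rule card_image)
  moreover have "(\<lambda>i. face_nbr i g) ` {i. i < 4 \<and> face_nbr i g \<in> U} = {h \<in> U. \<exists>i<4. h = face_nbr i g}"
    by auto
  ultimately show ?thesis
    by simp
qed

lemma sum_card_shared_sides_le:
  assumes "finite U" and "U \<noteq> {}" and "U \<subseteq> Gset"
  shows "(\<Sum>g\<in>U. card {i. i < 4 \<and> face_nbr i g \<in> U}) \<le> 2 * (card U - 1)"
proof -
  define adj where "adj g h \<longleftrightarrow> (\<exists>i<4. h = face_nbr i g)" for g h
  have "(\<Sum>g\<in>U. card {h \<in> U. adj g h}) \<le> 2 * (card U - 1)"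
  proof (rule sum_card_adjacent_le[where ht = height])
    fix g h h'
    assume g: "g \<in> U" and h: "h \<in> U" and "adj g h"
    then obtain i where i: "i < 4" "h = face_nbr i g"
      by (auto simp: adj_def)
    have gG: "g \<in> Gset"
      using g assms(3) by blast
    have "g = face_nbr (opp_side i) h"
      using face_nbr_opp_side[OF gG i(1)] i(2) by simp
    then show "adj h g"
      using opp_side_less[OF i(1)] unfolding adj_def by blast
    show "height h \<noteq> height g"
      using height_face_nbr_neq[OF gG i(1)] i(2) by simp
    assume "h' \<in> U" "adj g h'" and lower: "height h < height g" "height h' < height g"
    then obtain i' where i': "i' < 4" "h' = face_nbr i' g"
      by (auto simp: adj_def)
    then show "h = h'"
      using lower_face_nbr_unique[OF gG i(1) i'(1)] i lower by simp
  qed (use assms in auto)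
  then show ?thesis
    using card_shared_sides_eq assms(3) by (simp add: adj_def subset_iff)
qed

lemma card_boundary_sides_ge:
  assumes "g \<in> Gset"
    and "\<And>i. i < 5 \<Longrightarrow> \<not> (i < 4 \<and> face_nbr i g \<in> U) \<Longrightarrow> face_edge g i \<in> E"
  shows "5 \<le> card {i. i < 4 \<and> face_nbr i g \<in> U} + card (face_edges g \<inter> E)"
proof -
  define S where "S = {i. i < 4 \<and> face_nbr i g \<in> U}"
  have "face_edge g i \<in> face_edges g \<inter> E" if "i \<in> {..<5} - S" for i
    using that assms(2)[of i] by (auto simp: S_def face_edges_def)
  then have "face_edge g ` ({..<5} - S) \<subseteq> face_edges g \<inter> E"
    by blast
  then have "card (face_edge g ` ({..<5} - S)) \<le> card (face_edges g \<inter> E)"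
    by (rule card_mono[rotated]) (simp add: face_edges_def)
  moreover have "S \<subseteq> {..<5}"
    by (auto simp: S_def)
  then have "card (face_edge g ` ({..<5} - S)) = 5 - card S"
    using face_edge_inj[OF assms(1)]
    by (simp add: card_image inj_on_subset card_Diff_subset finite_subset)
  ultimately show ?thesis
    by (simp add: S_def)
qed

lemma card_boundary_sides_sum_gt:
  assumes "finite U" and "U \<noteq> {}" and "U \<subseteq> Gset"
    and on_E: "\<And>g i. g \<in> U \<Longrightarrow> i < 5 \<Longrightarrow> \<not> (i < 4 \<and> face_nbr i g \<in> U) \<Longrightarrow> face_edge g i \<in> E"
  shows "3 * card U + 1 < (\<Sum>g\<in>U. card (face_edges g \<inter> E))"
proof -
  have "5 \<le> card {i. i < 4 \<and> face_nbr i g \<in> U} + card (face_edges g \<inter> E)" if "g \<in> U" for g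
    using card_boundary_sides_ge[of g U E] on_E[OF that] that assms(3) by blast
  then have "(\<Sum>g\<in>U. 5) \<le> (\<Sum>g\<in>U. card {i. i < 4 \<and> face_nbr i g \<in> U} + card (face_edges g \<inter> E))"
    by (rule sum_mono)
  moreover have "card U \<noteq> 0"
    using assms(1,2) by simp
  ultimately show ?thesis
    using sum_card_shared_sides_le[OF assms(1-3)] by (simp add: sum.distrib)
qed

lemma two_points_attain_bound:
  fixes f :: "'a \<Rightarrow> nat"
  assumes "finite U" and "\<And>x. x \<in> U \<Longrightarrow> f x \<le> m" and "(m - 1) * card U + 1 < (\<Sum>x\<in>U. f x)"
  shows "\<exists>x\<in>U. \<exists>y\<in>U. x \<noteq> y \<and> f x = m \<and> f y = m"
proof (rule ccontr)
  assume no_two: "\<not> ?thesis"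
  define M where "M = {x \<in> U. f x = m}"
  have "card M \<le> 1"
    using no_two assms(1) by (auto simp: M_def card_le_Suc0_iff_eq)
  have "f x \<le> (m - 1) + (if x \<in> M then 1 else 0)" if "x \<in> U" for x
    using assms(2)[OF that] that by (auto simp: M_def)
  then have "(\<Sum>x\<in>U. f x) \<le> (\<Sum>x\<in>U. (m - 1) + (if x \<in> M then 1 else 0))"
    by (rule sum_mono)
  also have "\<dots> = (m - 1) * card U + card M"
    using assms(1) by (simp add: sum.distrib M_def Int_absorb1 flip: sum.inter_filter)
  finally show False
    using \<open>card M \<le> 1\<close> assms(3) by linarith
qed

lemma embedded_edge_cycle_next_edge:
  assumes cyc: "embedded_edge_cycle vs es" and "S \<subseteq> set es"
    and closed: "\<And>e w. e \<in> S \<Longrightarrow> w \<in> edge_ends e \<Longrightarrow> \<exists>e'\<in>S. e' \<noteq> e \<and> w \<in> edge_ends e'"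
    and i: "i < length es" and "es ! i \<in> S"
  shows "es ! (Suc i mod length es) \<in> S"
proof -
  define n where "n = length es"
  have len: "length vs = n" and dist_vs: "distinct vs"
    and ends: "\<And>i. i < n \<Longrightarrow> edge_ends (es ! i) = {vs ! i, vs ! (Suc i mod n)}"
    using cyc by (auto simp: embedded_edge_cycle_def n_def edge_ends_def)
  obtain e' where e': "e' \<in> S" "e' \<noteq> es ! i" "vs ! (Suc i mod n) \<in> edge_ends e'"
    using closed[OF \<open>es ! i \<in> S\<close>] ends[OF i[folded n_def]] by blast
  have "e' \<in> set es"
    using e'(1) assms(2) by blast
  then obtain q where q: "q < n" "e' = es ! q"
    by (metis in_set_conv_nth n_def)
  have "q \<noteq> i"
    using e' q by blast
  then have "Suc q mod n \<noteq> Suc i mod n"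
    using q(1) i by (simp add: mod_Suc n_def)
  moreover have "vs ! (Suc i mod n) = vs ! q \<or> vs ! (Suc i mod n) = vs ! (Suc q mod n)"
    using e'(3) ends[OF q(1)] q(2) by auto
  moreover have "Suc i mod n < n" "Suc q mod n < n"
    using i[folded n_def] by simp_all
  ultimately have "q = Suc i mod n"
    using nth_eq_iff_index_eq[OF dist_vs] len q(1) by auto
  then show ?thesis
    using e' q by (simp add: n_def)
qed

lemma embedded_edge_cycle_edges_subset:
  assumes cyc: "embedded_edge_cycle vs es" and S: "S \<subseteq> set es" "S \<noteq> {}"
    and closed: "\<And>e w. e \<in> S \<Longrightarrow> w \<in> edge_ends e \<Longrightarrow> \<exists>e'\<in>S. e' \<noteq> e \<and> w \<in> edge_ends e'"
  shows "set es \<subseteq> S"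
proof
  define n where "n = length es"
  obtain e0 where "e0 \<in> S"
    using S(2) by blast
  then obtain i0 where i0: "i0 < n" "es ! i0 \<in> S"
    using S(1) by (metis in_set_conv_nth n_def subsetD)
  have reach: "es ! ((i0 + d) mod n) \<in> S" for d
  proof (induction d)
    case (Suc d)
    have "(i0 + d) mod n < n"
      using i0(1) by simp
    then show ?case
      using embedded_edge_cycle_next_edge[OF cyc S(1) closed _ Suc] by (simp add: mod_Suc_eq n_def)
  qed (use i0 in simp)
  fix e
  assume "e \<in> set es"
  then obtain k where "k < n" "e = es ! k"
    by (auto simp: in_set_conv_nth n_def)
  moreover have "(i0 + (n - i0 + k)) mod n = k"
    using \<open>k < n\<close> i0(1) by simp
  ultimately show "e \<in> S"
    using reach[of "n - i0 + k"] by simp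
qed

lemma card_face_edges_inter_cycle_le:
  assumes cyc: "embedded_edge_cycle vs es" and "g \<in> Gset" and "g' \<in> Gset" and "g' \<noteq> g"
    and "face_edge g' 4 \<in> set es"
  shows "card (face_edges g \<inter> set es) \<le> 4"
proof (rule ccontr)
  assume "\<not> ?thesis"
  moreover have "card (face_edges g \<inter> set es) \<le> card (face_edges g)"
    by (rule card_mono) (auto simp: face_edges_def)
  ultimately have "face_edges g \<inter> set es = face_edges g"
    using card_face_edges[OF assms(2)] by (intro card_subset_eq) (auto simp: face_edges_def)
  then have "face_edges g \<subseteq> set es"
    by blast
  then have "set es \<subseteq> face_edges g"
  proof (rule embedded_edge_cycle_edges_subset[OF cyc])
    fix e w
    assume "e \<in> face_edges g" "w \<in> edge_ends e"
    then obtain j where j: "j < 5" "e = face_edge g j"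
      by (auto simp: face_edges_def)
    then obtain j' where "j' < 5" "j' \<noteq> j" "w \<in> edge_ends (face_edge g j')"
      using face_corner_shared \<open>w \<in> edge_ends e\<close> by blast
    moreover have "face_edge g j' \<noteq> face_edge g j"
      using face_edge_inj[OF assms(2)] j(1) calculation(1,2) by (auto dest: inj_onD)
    ultimately show "\<exists>e'\<in>face_edges g. e' \<noteq> e \<and> w \<in> edge_ends e'"
      using j by (auto simp: face_edges_def)
  next
    have "face_edge g 0 \<in> face_edges g"
      by (simp add: face_edges_def)
    then show "face_edges g \<noteq> {}"
      by blast
  qed
  then obtain j where "j < 5" "face_edge g' 4 = face_edge g j"
    using assms(5) by (auto simp: face_edges_def)
  then show False
    using face_edge_eq_face_edgeD[OF assms(3,2), of 4 j] assms(4) by simp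
qed

section \<open>The pentagon\<close>

definition cos5 :: "int \<Rightarrow> real" where
  "cos5 d = cos (2 * pi * of_int d / 5)"

lemma cos5_mod: "cos5 d = cos5 (d mod 5)"
proof -
  have "of_int d = (of_int (d mod 5) + 5 * of_int (d div 5) :: real)"
    by (metis of_int_add of_int_mult of_int_numeral mod_mult_div_eq add.commute)
  then have "2 * pi * of_int d / 5 = 2 * pi * of_int (d mod 5) / 5 + 2 * pi * of_int (d div 5)"
    by (simp add: field_simps)
  then show ?thesis
    unfolding cos5_def using sin_cos_eq_iff by blast
qed

lemma cos5_values:
  "cos5 0 = 1" "cos5 5 = 1" "cos5 (-1) = cos5 1" "cos5 (-2) = cos5 2" "cos5 3 = cos5 2"
  "cos5 (-3) = cos5 2" "cos5 4 = cos5 1" "cos5 (-4) = cos5 1"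
proof -
  have minus: "cos5 (- d) = cos5 d" for d
    by (simp add: cos5_def)
  show "cos5 0 = 1" "cos5 5 = 1"
    by (simp_all add: cos5_def)
  show "cos5 (-1) = cos5 1" "cos5 (-2) = cos5 2"
    using minus[of 1] minus[of 2] by simp_all
  show "cos5 3 = cos5 2" "cos5 (-3) = cos5 2" "cos5 4 = cos5 1" "cos5 (-4) = cos5 1"
    using cos5_mod[of "-2"] cos5_mod[of "-3"] cos5_mod[of "-1"] cos5_mod[of "-4"] minus[of 1] minus[of 2]
    by simp_all
qed

lemma cos5_2_less_cos5_1: "cos5 2 < cos5 1"
  unfolding cos5_def by (rule cos_monotone_0_pi) (auto simp: field_simps)

lemma cos5_1_less_1: "cos5 1 < 1"
  using cos_monotone_0_pi[of 0 "2 * pi / 5"] unfolding cos5_def by (simp add: field_simps)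

lemma pc_inner: "inner (pc a) (pc b) = cos5 (int a - int b)"
  unfolding pc_def cos5_def inner_complex_def by (simp add: cos_diff[symmetric] field_simps)

lemma norm_pc [simp]: "norm (pc k) = 1"
  by (simp add: pc_def)

lemma pc_mod: "pc k = pc (k mod 5)"
proof -
  have "real k = real (k mod 5) + 5 * real (k div 5)"
    by (metis of_nat_add of_nat_mult of_nat_numeral mod_mult_div_eq add.commute)
  then have "2 * pi * real k / 5 = 2 * pi * real (k mod 5) / 5 + 2 * pi * of_int (int (k div 5))"
    by (simp add: field_simps)
  then show ?thesis
    unfolding pc_def cis.ctr using sin_cos_eq_iff by metis
qed

lemma pc_neq_pc_Suc: "pc i \<noteq> pc (Suc i)"
proof
  assume "pc i = pc (Suc i)"
  then have "inner (pc i) (pc (Suc i)) = 1"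
    by (simp add: pc_inner cos5_values)
  then show False
    using cos5_1_less_1 by (simp add: pc_inner cos5_values)
qed

text \<open>Side i of the pentagon lies on the line where this linear functional attains its maximum
  over the pentagon.\<close>
definition side_normal :: "nat \<Rightarrow> complex" where
  "side_normal i = pc i + pc (Suc i)"

definition side_level :: real where
  "side_level = 1 + cos5 1"

lemma inner_side_normal_pc: "inner (side_normal i) (pc k) = cos5 (int i - int k) + cos5 (int (Suc i) - int k)"
  by (simp add: side_normal_def inner_add_left pc_inner)

lemma inner_side_normal_side_ends:
  "inner (side_normal i) (pc i) = side_level" "inner (side_normal i) (pc (Suc i)) = side_level"
  by (simp_all add: inner_side_normal_pc side_level_def cos5_values)

lemma inner_side_normal_pc_le:
  assumes "i < 5"
  shows "inner (side_normal i) (pc k) \<le> side_level"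
    and "k mod 5 \<noteq> i \<Longrightarrow> k mod 5 \<noteq> Suc i mod 5 \<Longrightarrow> inner (side_normal i) (pc k) < side_level"
proof -
  have "i = 0 \<or> i = 1 \<or> i = 2 \<or> i = 3 \<or> i = 4"
    using assms by auto
  moreover have "k mod 5 = 0 \<or> k mod 5 = 1 \<or> k mod 5 = 2 \<or> k mod 5 = 3 \<or> k mod 5 = 4"
    by auto
  ultimately have "inner (side_normal i) (pc (k mod 5)) \<le> side_level \<and>
      (k mod 5 \<noteq> i \<longrightarrow> k mod 5 \<noteq> Suc i mod 5 \<longrightarrow> inner (side_normal i) (pc (k mod 5)) < side_level)"
    using cos5_2_less_cos5_1 cos5_1_less_1
    by (elim disjE) (simp_all add: inner_side_normal_pc side_level_def cos5_values)
  then show "inner (side_normal i) (pc k) \<le> side_level"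
    and "k mod 5 \<noteq> i \<Longrightarrow> k mod 5 \<noteq> Suc i mod 5 \<Longrightarrow> inner (side_normal i) (pc k) < side_level"
    by (simp_all flip: pc_mod)
qed

lemma side_normal_nonzero: "side_normal i \<noteq> 0"
proof
  assume "side_normal i = 0"
  then have "side_level = 0"
    using inner_side_normal_side_ends(1)[of i] by simp
  moreover have "-1 \<le> cos5 2"
    by (simp add: cos5_def)
  ultimately show False
    using cos5_2_less_cos5_1 by (simp add: side_level_def)
qed

lemma closed_segment_inner_eq_imp_endpoint:
  fixes a b p n :: "'a::real_inner"
  assumes "p \<in> closed_segment a b" and "inner n a < c" and "inner n b \<le> c" and "inner n p = c"
  shows "p = b"
proof -
  obtain u where u: "0 \<le> u" "u \<le> 1" "p = (1 - u) *\<^sub>R a + u *\<^sub>R b"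
    using assms(1) by (auto simp: closed_segment_def)
  have "u = 1"
  proof (rule ccontr)
    assume "u \<noteq> 1"
    then have "(1 - u) * inner n a < (1 - u) * c"
      using u assms(2) by simp
    moreover have "u * inner n b \<le> u * c"
      using u assms(3) by (simp add: mult_left_mono)
    moreover have "inner n p = (1 - u) * inner n a + u * inner n b"
      using u(3) by (simp add: inner_add_right)
    moreover have "(1 - u) * c + u * c = c"
      by (simp add: algebra_simps)
    ultimately have "inner n p < c"
      by linarith
    then show False
      using assms(4) by simp
  qed
  then show ?thesis
    using u by simp
qed

definition side_point :: "nat \<Rightarrow> real \<Rightarrow> complex" where
  "side_point i t = of_real (1 - t) * pc i + of_real t * pc (Suc i)"

lemma side_point_scaleR: "side_point i t = (1 - t) *\<^sub>R pc i + t *\<^sub>R pc (Suc i)"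
  by (simp add: side_point_def scaleR_conv_of_real)

lemma side_point_in_closed_segment:
  "0 \<le> t \<Longrightarrow> t \<le> 1 \<Longrightarrow> side_point i t \<in> closed_segment (pc i) (pc (Suc i))"
  by (auto simp: side_point_scaleR closed_segment_def)

lemma side_point_inj: "side_point i t = side_point i t' \<Longrightarrow> t = t'"
proof -
  assume "side_point i t = side_point i t'"
  then have "(t - t') *\<^sub>R (pc (Suc i) - pc i) = 0"
    by (simp add: side_point_scaleR algebra_simps)
  then show "t = t'"
    using pc_neq_pc_Suc[of i] by simp
qed

lemma pc_in_Pent: "pc k \<in> Pent"
  unfolding Pent_def by (subst pc_mod) (simp add: hull_inc)

lemma side_point_in_Pent: "0 \<le> t \<Longrightarrow> t \<le> 1 \<Longrightarrow> side_point i t \<in> Pent"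
  unfolding side_point_scaleR Pent_def
  by (rule convexD) (auto simp: convex_convex_hull pc_in_Pent[unfolded Pent_def])

lemma compact_Pent: "compact Pent"
  unfolding Pent_def by (rule compact_convex_hull) (simp add: finite_imp_compact)

lemma Pent_subset_halfspace: "i < 5 \<Longrightarrow> Pent \<subseteq> {x. inner (side_normal i) x \<le> side_level}"
  unfolding Pent_def
  by (rule hull_minimal) (auto intro: inner_side_normal_pc_le convex_halfspace_le)

definition side_midpoint :: "nat \<Rightarrow> complex" where
  "side_midpoint i = side_point i (1/2)"

lemma inner_side_normal_side_midpoint: "inner (side_normal i) (side_midpoint i) = side_level"
  using inner_side_normal_side_ends[of i]
  by (simp add: side_midpoint_def side_point_scaleR inner_add_right)

lemma norm_side_midpoint_less: "norm (side_midpoint i) < 1"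
proof -
  have "inner (side_midpoint i) (side_midpoint i) = (1 + cos5 1) / 2"
    by (simp add: side_midpoint_def side_point_scaleR inner_add_left inner_add_right pc_inner
        cos5_values inner_commute)
  then show ?thesis
    using cos5_1_less_1 by (simp add: norm_eq_sqrt_inner)
qed

lemma side_midpoint_not_interior: "i < 5 \<Longrightarrow> side_midpoint i \<notin> interior Pent"
  using interior_mono[OF Pent_subset_halfspace] interior_halfspace_le[OF side_normal_nonzero]
    inner_side_normal_side_midpoint by fastforce

definition boundary_except_side :: "nat \<Rightarrow> complex set" where
  "boundary_except_side i = pc ` {..<5} \<union> (\<Union>j\<in>{..<5} - {i}. closed_segment (pc j) (pc (Suc j)))"

lemma closed_boundary_except_side: "closed (boundary_except_side i)"
  unfolding boundary_except_side_def by (intro closed_Un closed_UN finite_imp_closed) auto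

lemma side_midpoint_notin_boundary_except_side:
  assumes i: "i < 5"
  shows "side_midpoint i \<notin> boundary_except_side i"
proof
  assume "side_midpoint i \<in> boundary_except_side i"
  moreover have "side_midpoint i \<noteq> pc k" for k
    using norm_side_midpoint_less[of i] by auto
  ultimately obtain j where j: "j < 5" "j \<noteq> i"
    and on_j: "side_midpoint i \<in> closed_segment (pc j) (pc (Suc j))"
    by (auto simp: boundary_except_side_def)
  have le: "inner (side_normal i) (pc k) \<le> side_level" for k
    by (rule inner_side_normal_pc_le(1)[OF i])
  have lt: "inner (side_normal i) (pc k) < side_level" if "k mod 5 \<noteq> i" "k mod 5 \<noteq> Suc i mod 5" for k
    using inner_side_normal_pc_le(2)[OF i that] .
  show False
  proof (cases "j = Suc i mod 5")
    case True
    then have "Suc j mod 5 \<noteq> i" "Suc j mod 5 \<noteq> Suc i mod 5"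
      using i by presburger+
    then have "side_midpoint i = pc j"
      using closed_segment_inner_eq_imp_endpoint[of _ "pc (Suc j)" "pc j"] on_j lt le
        inner_side_normal_side_midpoint by (metis closed_segment_commute)
    then show False
      using \<open>\<And>k. side_midpoint i \<noteq> pc k\<close> by blast
  next
    case False
    then have "j mod 5 \<noteq> i" "j mod 5 \<noteq> Suc i mod 5"
      using j by simp_all
    then have "side_midpoint i = pc (Suc j)"
      using closed_segment_inner_eq_imp_endpoint on_j lt le inner_side_normal_side_midpoint by blast
    then show False
      using \<open>\<And>k. side_midpoint i \<noteq> pc k\<close> by blast
  qed
qed

definition edge_param :: "nat \<Rightarrow> real \<Rightarrow> real" where
  "edge_param i t = (if snd (relator ! i) then t else 1 - t)"

definition side_param :: "complex \<Rightarrow> nat \<times> real" where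
  "side_param p = (SOME (i, t). i < 5 \<and> 0 < t \<and> t < 1 \<and> p = side_point i t)"

lemma edge_param_inj: "edge_param i t = edge_param i t' \<Longrightarrow> t = t'"
  by (simp add: edge_param_def split: if_splits)

lemma canon_eq:
  "canon g p =
    (if \<exists>i<5. p = pc i then Vtx (fcorner g (SOME i. i < 5 \<and> p = pc i))
     else if \<exists>i<5. \<exists>t. 0 < t \<and> t < 1 \<and> p = side_point i t
     then EdgePt (face_edge g (fst (side_param p))) (edge_param (fst (side_param p)) (snd (side_param p)))
     else FacePt g p)"
  unfolding canon_def side_param_def side_point_def edge_param_def by (simp add: case_prod_beta) blast

lemma side_param_spec:
  assumes "\<exists>i<5. \<exists>t. 0 < t \<and> t < 1 \<and> p = side_point i t"
  shows "fst (side_param p) < 5 \<and> 0 < snd (side_param p) \<and> snd (side_param p) < 1 \<and>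
    p = side_point (fst (side_param p)) (snd (side_param p))"
proof -
  obtain i t where it: "i < 5" "0 < t" "t < 1" "p = side_point i t"
    using assms by blast
  have "case side_param p of (i, t) \<Rightarrow> i < 5 \<and> 0 < t \<and> t < 1 \<and> p = side_point i t"
    unfolding side_param_def by (rule someI[of _ "(i, t)"]) (use it in simp)
  then show ?thesis
    by (simp add: case_prod_beta)
qed

lemma pc_in_boundary_except_side: "k < 5 \<Longrightarrow> pc k \<in> boundary_except_side i"
  by (simp add: boundary_except_side_def)

lemma side_point_in_boundary_except_side:
  "j < 5 \<Longrightarrow> j \<noteq> i \<Longrightarrow> 0 \<le> t \<Longrightarrow> t \<le> 1 \<Longrightarrow> side_point j t \<in> boundary_except_side i"
  using side_point_in_closed_segment[of t j] unfolding boundary_except_side_def by blast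

lemma canon_side_point:
  assumes "i < 5" and "0 < t" and "t < 1" and off: "side_point i t \<notin> boundary_except_side i"
  shows "canon g (side_point i t) = EdgePt (face_edge g i) (edge_param i t)"
proof -
  let ?p = "side_point i t"
  have not_vertex: "\<not> (\<exists>k<5. ?p = pc k)"
    using off pc_in_boundary_except_side by auto
  have "j = i" if "j < 5" "0 < t'" "t' < 1" "?p = side_point j t'" for j t'
    using off side_point_in_boundary_except_side[of j i t'] that by auto
  moreover have ex: "\<exists>i<5. \<exists>t. 0 < t \<and> t < 1 \<and> ?p = side_point i t"
    using assms by blast
  ultimately have "fst (side_param ?p) = i" "snd (side_param ?p) = t"
    using side_param_spec[OF ex] side_point_inj by metis+
  then show ?thesis
    using not_vertex ex by (simp add: canon_eq)
qed

lemma canon_off_boundary: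
  assumes "p \<notin> boundary_except_side i" and "\<not> (\<exists>t. 0 < t \<and> t < 1 \<and> p = side_point i t)"
  shows "canon g p = FacePt g p"
proof -
  have "j = i" if "j < 5" "0 < t" "t < 1" "p = side_point j t" for j t
    using assms(1) side_point_in_boundary_except_side[of j i t] that by auto
  then have "\<not> (\<exists>j<5. \<exists>t. 0 < t \<and> t < 1 \<and> p = side_point j t)"
    using assms(2) by blast
  moreover have "\<not> (\<exists>k<5. p = pc k)"
    using assms(1) pc_in_boundary_except_side by auto
  ultimately show ?thesis
    by (simp add: canon_eq)
qed

lemma canon_EdgePtD:
  assumes "canon g p = EdgePt e s"
  shows "\<exists>j<5. \<exists>t. 0 < t \<and> t < 1 \<and> p = side_point j t \<and> e = face_edge g j \<and> s = edge_param j t"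
proof -
  have ex: "\<exists>i<5. \<exists>t. 0 < t \<and> t < 1 \<and> p = side_point i t"
    using assms by (auto simp: canon_eq split: if_splits)
  then have "e = face_edge g (fst (side_param p))" "s = edge_param (fst (side_param p)) (snd (side_param p))"
    using assms by (auto simp: canon_eq split: if_splits)
  then show ?thesis
    using side_param_spec[OF ex] by blast
qed

lemma canon_FacePtD: "canon g p = FacePt g' q \<Longrightarrow> g' = g \<and> q = p"
  by (auto simp: canon_eq split: if_splits)

lemma canon_eq_canon_off_boundary:
  assumes "g \<in> Gset" and "g' \<in> Gset" and "i < 5" and off: "p \<notin> boundary_except_side i"
    and not_nbr: "i < 4 \<Longrightarrow> g' \<noteq> face_nbr i g"
    and eq: "canon g' p' = canon g p"
  shows "g' = g \<and> p' = p"
proof (cases "\<exists>t. 0 < t \<and> t < 1 \<and> p = side_point i t")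
  case True
  then obtain t where t: "0 < t" "t < 1" "p = side_point i t"
    by blast
  then have "canon g' p' = EdgePt (face_edge g i) (edge_param i t)"
    using canon_side_point[OF assms(3)] off eq by simp
  then obtain j t' where j: "j < 5" "p' = side_point j t'"
    "face_edge g i = face_edge g' j" "edge_param i t = edge_param j t'"
    using canon_EdgePtD by blast
  then have "j = i" "g' = g"
    using face_edge_eq_face_edgeD[OF assms(1,2,3) j(1,3)] not_nbr by auto
  then show ?thesis
    using j t edge_param_inj by blast
next
  case False
  then show ?thesis
    using canon_off_boundary[OF off False] eq canon_FacePtD by metis
qed

section \<open>Topology of K\<close>

lemma istopology_quotient: "istopology (\<lambda>V. V \<subseteq> f ` topspace X \<and> openin X {x \<in> topspace X. f x \<in> V})"
proof -
  have "{x \<in> topspace X. f x \<in> V \<inter> W} = {x \<in> topspace X. f x \<in> V} \<inter> {x \<in> topspace X. f x \<in> W}"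
    for V W by auto
  moreover have "{x \<in> topspace X. f x \<in> \<Union>\<V>} = (\<Union>V\<in>\<V>. {x \<in> topspace X. f x \<in> V})" for \<V>
    by auto
  ultimately show ?thesis
    unfolding istopology_def by auto
qed

lemma openin_quotient_topology:
  "openin (quotient_topology X f) V \<longleftrightarrow> V \<subseteq> f ` topspace X \<and> openin X {x \<in> topspace X. f x \<in> V}"
  unfolding quotient_topology_def using topology_inverse'[OF istopology_quotient[of f X]] by simp

lemma topspace_quotient_topology: "topspace (quotient_topology X f) = f ` topspace X"
proof
  show "topspace (quotient_topology X f) \<subseteq> f ` topspace X"
    using openin_topspace[of "quotient_topology X f"] by (simp only: openin_quotient_topology)
  have "{x \<in> topspace X. f x \<in> f ` topspace X} = topspace X"
    by auto
  then have "openin (quotient_topology X f) (f ` topspace X)"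
    by (simp add: openin_quotient_topology)
  then show "f ` topspace X \<subseteq> topspace (quotient_topology X f)"
    by (rule openin_subset)
qed

lemma continuous_map_quotient_topology: "continuous_map X (quotient_topology X f) f"
  by (auto simp: continuous_map_def openin_quotient_topology topspace_quotient_topology)

lemma topspace_K_top: "topspace K_top = (\<lambda>(g, p). canon g p) ` (Gset \<times> Pent)"
  by (simp add: K_top_def topspace_quotient_topology)

lemma real_faces_subset_topspace: "U \<subseteq> Gset \<Longrightarrow> real_faces U \<subseteq> topspace K_top"
  by (auto simp: real_faces_def topspace_K_top)

lemma continuous_map_canon:
  assumes "g \<in> Gset"
  shows "continuous_map (top_of_set Pent) K_top (canon g)"
proof -
  have "continuous_map (top_of_set Pent) (prod_topology (discrete_topology Gset) (top_of_set Pent))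
      (\<lambda>p. (g, p))"
    using assms by (intro continuous_map_pairedI) auto
  then have "continuous_map (top_of_set Pent) K_top ((\<lambda>(g, p). canon g p) \<circ> (\<lambda>p. (g, p)))"
    unfolding K_top_def by (rule continuous_map_compose[OF _ continuous_map_quotient_topology])
  then show ?thesis
    by (simp add: o_def)
qed

lemma compactin_canon_image_complement:
  assumes "finite U" and "U \<subseteq> Gset" and "g \<in> U" and "openin (top_of_set Pent) N"
  shows "compactin K_top ((\<lambda>(g, p). canon g p) ` (U \<times> Pent - {g} \<times> N))"
proof -
  let ?X = "prod_topology (discrete_topology Gset) (top_of_set Pent)"
  have "compactin ?X (U \<times> Pent)"
    using assms(1,2) compact_Pent
    by (simp add: compactin_Times finite_imp_compactin compactin_subtopology subset_iff)
  moreover have "closedin ?X (topspace ?X - {g} \<times> N)"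
    using assms(2-4) by (intro closedin_diff closedin_topspace) (auto simp: openin_prod_Times_iff)
  moreover have "U \<times> Pent - {g} \<times> N = (topspace ?X - {g} \<times> N) \<inter> U \<times> Pent"
    using assms(2) by auto
  ultimately have "compactin ?X (U \<times> Pent - {g} \<times> N)"
    by (simp add: closed_Int_compactin)
  then show ?thesis
    unfolding K_top_def by (rule image_compactin[OF _ continuous_map_quotient_topology])
qed

text \<open>The complement of the image is the image of a compact set, hence closed.\<close>
lemma openin_canon_image:
  assumes "finite U" and "U \<subseteq> Gset" and "g \<in> U"
    and haus: "Hausdorff_space (subtopology K_top (real_faces U))"
    and N: "openin (top_of_set Pent) N"
    and saturated: "\<And>g' p' p. g' \<in> U \<Longrightarrow> p \<in> N \<Longrightarrow> canon g' p' = canon g p \<Longrightarrow> g' = g \<and> p' = p"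
  shows "openin (subtopology K_top (real_faces U)) (canon g ` N)"
proof -
  let ?Y = "subtopology K_top (real_faces U)"
  let ?q = "\<lambda>(g, p). canon g p"
  define A where "A = U \<times> Pent - {g} \<times> N"
  have "?q ` A \<subseteq> real_faces U"
    by (auto simp: A_def real_faces_def)
  then have closed: "closedin ?Y (?q ` A)"
    using compactin_canon_image_complement[OF assms(1-3) N]
    by (intro compactin_imp_closedin[OF haus]) (simp add: compactin_subtopology A_def)
  have top: "topspace ?Y = real_faces U"
    using real_faces_subset_topspace[OF assms(2)] by auto
  have "canon g ` N = topspace ?Y - ?q ` A"
  proof
    show "canon g ` N \<subseteq> topspace ?Y - ?q ` A"
    proof
      fix y
      assume "y \<in> canon g ` N"
      then obtain p where p: "p \<in> N" "y = canon g p"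
        by blast
      have "y \<in> real_faces U"
        using p openin_subset[OF N] assms(3) by (auto simp: real_faces_def)
      moreover have "y \<notin> ?q ` A"
      proof
        assume "y \<in> ?q ` A"
        then obtain g' p' where "(g', p') \<in> A" "canon g' p' = canon g p"
          using p(2) by auto
        then show False
          using saturated[of g' p p'] p(1) by (simp add: A_def)
      qed
      ultimately show "y \<in> topspace ?Y - ?q ` A"
        using top by blast
    qed
    show "topspace ?Y - ?q ` A \<subseteq> canon g ` N"
      by (force simp: top A_def real_faces_def)
  qed
  then show ?thesis
    using closed top by (metis openin_diff openin_topspace)
qed

lemma openin_preimage_interior_neighbourhood:
  assumes "continuous_map (top_of_set D) Y h" and "openin Y V" and "z \<in> interior D" and "h z \<in> V"
  obtains W where "open W" and "z \<in> W" and "W \<subseteq> D" and "h ` W \<subseteq> V"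
proof -
  have "openin (top_of_set D) {w \<in> D. h w \<in> V}"
    using openin_continuous_map_preimage[OF assms(1,2)] by simp
  then obtain T where "open T" and T: "{w \<in> D. h w \<in> V} = D \<inter> T"
    by (auto simp: openin_open)
  show ?thesis
  proof (rule that[of "interior D \<inter> T"])
    show "open (interior D \<inter> T)"
      using \<open>open T\<close> by (simp add: open_Int)
    show "z \<in> interior D \<inter> T" "interior D \<inter> T \<subseteq> D" "h ` (interior D \<inter> T) \<subseteq> V"
      using assms(3,4) T interior_subset[of D] by auto
  qed
qed

lemma open_chart_point_in_interior:
  fixes h f :: "'b::euclidean_space \<Rightarrow> 'a"
  assumes hm: "homeomorphic_map (top_of_set D) Y h"
    and fm: "homeomorphic_map (top_of_set C) (subtopology Y (f ` C)) f"
    and "N \<subseteq> C" and open_N: "openin Y (f ` N)"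
    and "x \<in> N" and "z \<in> interior D" and "h z = f x"
  shows "x \<in> interior C"
proof -
  have "h z \<in> f ` N"
    using assms(5,7) by simp
  then obtain W where W: "open W" "z \<in> W" "W \<subseteq> D" "h ` W \<subseteq> f ` N"
    using openin_preimage_interior_neighbourhood[OF homeomorphic_imp_continuous_map[OF hm] open_N assms(6)]
    by blast
  obtain k where "homeomorphic_maps (top_of_set C) (subtopology Y (f ` C)) f k"
    using fm homeomorphic_map_maps by blast
  then have k: "homeomorphic_map (subtopology Y (f ` C)) (top_of_set C) k"
    and k_f: "\<And>c. c \<in> C \<Longrightarrow> k (f c) = c"
    by (auto simp: homeomorphic_maps_map)
  have "f ` C \<subseteq> topspace Y"
    using continuous_map_image_subset_topspace[OF homeomorphic_imp_continuous_map[OF fm]] by simp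
  then have hW: "h ` W \<subseteq> topspace (subtopology Y (f ` C))"
    using W(4) image_mono[OF assms(3), of f] by (simp only: topspace_subtopology) blast
  have "continuous_map (top_of_set W) (subtopology Y (f ` C)) h"
    using continuous_map_from_subtopology[OF homeomorphic_imp_continuous_map[OF hm], of W] W(3) hW
    by (simp add: continuous_map_in_subtopology subtopology_subtopology Int_absorb1
        image_subset_iff_funcset)
  then have kh: "continuous_map (top_of_set W) (top_of_set C) (k \<circ> h)"
    using homeomorphic_imp_continuous_map[OF k] continuous_map_compose by blast
  have "inj_on h W"
    using homeomorphic_imp_injective_map[OF hm] W(3) by (simp add: inj_on_subset)
  moreover have "inj_on k (h ` W)"
    using inj_on_subset[OF homeomorphic_imp_injective_map[OF k] hW] .
  ultimately have "inj_on (k \<circ> h) W"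
    by (rule comp_inj_on)
  moreover have "continuous_on W (k \<circ> h)"
    using kh by (simp add: continuous_map_subtopology_eu)
  ultimately have "open ((k \<circ> h) ` W)"
    using invariance_of_domain W(1) by blast
  moreover have "x \<in> (k \<circ> h) ` W"
    using W(2) assms(3,5,7) k_f by (metis comp_apply image_eqI subsetD)
  moreover have "(k \<circ> h) ` W \<subseteq> C"
    using continuous_map_image_subset_topspace[OF kh] by simp
  ultimately show ?thesis
    using interior_maximal by blast
qed

lemma homeomorphic_map_canon:
  assumes "g \<in> Gset" and haus: "Hausdorff_space (subtopology K_top R)"
    and "compact C" and "C \<subseteq> Pent" and "canon g ` C \<subseteq> R" and "inj_on (canon g) C"
  shows "homeomorphic_map (top_of_set C) (subtopology (subtopology K_top R) (canon g ` C)) (canon g)"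
proof (rule continuous_imp_homeomorphic_map)
  show "continuous_map (top_of_set C) (subtopology (subtopology K_top R) (canon g ` C)) (canon g)"
    using continuous_map_from_subtopology[OF continuous_map_canon[OF assms(1)], of C] assms(4,5)
    by (auto simp: continuous_map_in_subtopology subtopology_subtopology Int_absorb1)
  then show "canon g ` topspace (top_of_set C) = topspace (subtopology (subtopology K_top R) (canon g ` C))"
    using continuous_map_image_subset_topspace by fastforce
  show "compact_space (top_of_set C)"
    using assms(3) by (simp add: compact_space_subtopology)
  show "Hausdorff_space (subtopology (subtopology K_top R) (canon g ` C))"
    using haus by (rule Hausdorff_space_subtopology)
  show "inj_on (canon g) (topspace (top_of_set C))"
    using assms(6) by simp
qed

lemma side_midpoint_in_open_disc:
  assumes "U \<subseteq> Gset" and "g \<in> U" and "i < 5"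
    and hm: "homeomorphic_map (top_of_set (cball (0::complex) 1)) (subtopology K_top (real_faces U)) h"
    and hs: "h ` sphere 0 1 = (\<Union>e \<in> set es. real_edge e)"
    and "face_edge g i \<notin> set es"
  obtains z where "z \<in> ball 0 1" and "h z = canon g (side_midpoint i)"
proof -
  let ?m = "side_midpoint i"
  have "canon g ?m = EdgePt (face_edge g i) (edge_param i (1/2))"
    using canon_side_point[OF assms(3)] side_midpoint_notin_boundary_except_side[OF assms(3)]
    by (simp add: side_midpoint_def)
  then have "canon g ?m \<notin> real_edge e" if "e \<in> set es" for e
    using that assms(6) by (auto simp: real_edge_def)
  then have not_sphere: "canon g ?m \<notin> h ` sphere 0 1"
    unfolding hs by blast
  have "canon g ?m \<in> real_faces U"
    using assms(2) side_point_in_Pent by (auto simp: real_faces_def side_midpoint_def)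
  then have "canon g ?m \<in> h ` cball 0 1"
    using homeomorphic_imp_surjective_map[OF hm] real_faces_subset_topspace[OF assms(1)] by auto
  then obtain z where z: "canon g ?m = h z" "z \<in> cball 0 1"
    by (rule imageE)
  have "z \<notin> sphere 0 1"
    using z(1) not_sphere by (metis imageI)
  then have "z \<in> ball 0 1"
    using z(2) by (auto simp: le_less)
  then show ?thesis
    using that[of z] z(1) by simp
qed

lemma glued_only_near_unshared_side:
  assumes "U \<subseteq> Gset" and "g \<in> U" and "i < 5" and not_shared: "\<not> (i < 4 \<and> face_nbr i g \<in> U)"
  obtains d where "d > 0"
    and "\<And>p g' p'. p \<in> cball (side_midpoint i) d \<Longrightarrow> g' \<in> U \<Longrightarrow> canon g' p' = canon g p \<Longrightarrow>
           g' = g \<and> p' = p"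
proof -
  obtain d where "d > 0" and d: "\<And>p. p \<in> boundary_except_side i \<Longrightarrow> d \<le> dist (side_midpoint i) p"
    using separate_point_closed[OF closed_boundary_except_side side_midpoint_notin_boundary_except_side]
      assms(3) by metis
  show ?thesis
  proof (rule that[of "d / 2"])
    fix p g' p'
    assume p: "p \<in> cball (side_midpoint i) (d / 2)" and g': "g' \<in> U" and eq: "canon g' p' = canon g p"
    show "g' = g \<and> p' = p"
    proof (rule canon_eq_canon_off_boundary[OF _ _ assms(3) _ _ eq])
      show "g \<in> Gset" "g' \<in> Gset"
        using assms(1,2) g' by blast+
      show "p \<notin> boundary_except_side i"
        using p d \<open>d > 0\<close> by fastforce
      show "g' \<noteq> face_nbr i g" if "i < 4"
        using not_shared g' that by blast
    qed
  qed (use \<open>d > 0\<close> in simp)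
qed

lemma unshared_side_on_boundary:
  assumes "finite U" and "U \<subseteq> Gset"
    and hm: "homeomorphic_map (top_of_set (cball (0::complex) 1)) (subtopology K_top (real_faces U)) h"
    and hs: "h ` sphere 0 1 = (\<Union>e \<in> set es. real_edge e)"
    and "g \<in> U" and "i < 5" and not_shared: "\<not> (i < 4 \<and> face_nbr i g \<in> U)"
  shows "face_edge g i \<in> set es"
proof (rule ccontr)
  assume not_on_boundary: "face_edge g i \<notin> set es"
  let ?Y = "subtopology K_top (real_faces U)"
  let ?m = "side_midpoint i"
  obtain d where "d > 0" and glued: "\<And>p g' p'. p \<in> cball ?m d \<Longrightarrow> g' \<in> U \<Longrightarrow>
      canon g' p' = canon g p \<Longrightarrow> g' = g \<and> p' = p"
    using glued_only_near_unshared_side[OF assms(2,5,6) not_shared] by blast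
  define N where "N = Pent \<inter> ball ?m d"
  define C where "C = Pent \<inter> cball ?m d"
  have "N \<subseteq> C" and "C \<subseteq> Pent" and "compact C"
    using compact_Pent by (auto simp: N_def C_def compact_Int_closed)
  have m: "?m \<in> N"
    using \<open>d > 0\<close> side_point_in_Pent by (simp add: N_def side_midpoint_def)
  have "Hausdorff_space (top_of_set (cball (0::complex) 1))"
    by (simp add: Hausdorff_space_subtopology)
  then have haus: "Hausdorff_space ?Y"
    using hm homeomorphic_Hausdorff_space homeomorphic_map_maps homeomorphic_space_def by blast
  have open_N: "openin ?Y (canon g ` N)"
  proof (rule openin_canon_image[OF assms(1,2,5) haus])
    show "openin (top_of_set Pent) N"
      unfolding N_def by (simp add: openin_open_Int)
    show "g' = g \<and> p' = p" if "g' \<in> U" "p \<in> N" "canon g' p' = canon g p" for g' p' p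
      using glued[of p g' p'] that by (simp add: N_def)
  qed
  have "inj_on (canon g) C"
    using glued assms(5) by (intro inj_onI) (simp add: C_def)
  moreover have "canon g ` C \<subseteq> real_faces U"
    using \<open>C \<subseteq> Pent\<close> assms(5) by (auto simp: real_faces_def)
  ultimately have chart: "homeomorphic_map (top_of_set C) (subtopology ?Y (canon g ` C)) (canon g)"
    using homeomorphic_map_canon[OF _ haus \<open>compact C\<close> \<open>C \<subseteq> Pent\<close>] assms(2,5) by blast
  obtain z where "z \<in> ball 0 1" and "h z = canon g ?m"
    using side_midpoint_in_open_disc[OF assms(2,5,6) hm hs not_on_boundary] .
  then have "?m \<in> interior C"
    using open_chart_point_in_interior[OF hm chart \<open>N \<subseteq> C\<close> open_N m] by simp
  then show False
    using interior_mono[OF \<open>C \<subseteq> Pent\<close>] side_midpoint_not_interior[OF assms(6)] by blast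
qed

theorem lemma3p2:
  fixes vs :: "grp list" and es :: "edge list" and U :: "grp set"
  assumes "embedded_edge_cycle vs es"
    and "finite U" and "U \<noteq> {}" and "U \<subseteq> Gset"
    and "\<exists>h. homeomorphic_map (top_of_set (cball (0::complex) 1))
               (subtopology K_top (real_faces U)) h
             \<and> h ` sphere 0 1 = (\<Union>e \<in> set es. real_edge e)"
  shows "card U = 1 \<or>
         (\<exists>g1 \<in> U. \<exists>g2 \<in> U. g1 \<noteq> g2 \<and>
            card (face_edges g1 \<inter> set es) = 4 \<and> card (face_edges g2 \<inter> set es) = 4)"
proof (cases "card U = 1")
  case False
  obtain h where hm: "homeomorphic_map (top_of_set (cball (0::complex) 1)) (subtopology K_top (real_faces U)) h"
    and hs: "h ` sphere 0 1 = (\<Union>e \<in> set es. real_edge e)"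
    using assms(5) by blast
  have "card U \<noteq> 0"
    using assms(2,3) by simp
  then have two: "2 \<le> card U"
    using False by linarith
  have on_boundary: "face_edge g i \<in> set es"
    if "g \<in> U" "i < 5" "\<not> (i < 4 \<and> face_nbr i g \<in> U)" for g i
    using unshared_side_on_boundary[OF assms(2,4) hm hs that] .
  have at_most_4: "card (face_edges g \<inter> set es) \<le> 4" if g: "g \<in> U" for g
  proof -
    have "U \<noteq> {g}"
      using two by auto
    then obtain g' where g': "g' \<in> U" "g' \<noteq> g"
      using g by blast
    then have "face_edge g' 4 \<in> set es"
      using on_boundary[of g' 4] by simp
    then show ?thesis
      using card_face_edges_inter_cycle_le[OF assms(1) _ _ g'(2)] g g'(1) assms(4) by blast
  qed
  have "3 * card U + 1 < (\<Sum>g\<in>U. card (face_edges g \<inter> set es))"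
    using card_boundary_sides_sum_gt[OF assms(2,3,4) on_boundary] .
  then show ?thesis
    using two_points_attain_bound[of U "\<lambda>g. card (face_edges g \<inter> set es)" 4] assms(2) at_most_4 by simp
qed simp

end
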